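(* For every Scott-open subset $\mathcal U$ of $\mathcal Q\mathbb R_\ell$, the set $\{x\in\mathbb R:\{x\}\in\mathcal U\}$ is open in $\mathbb R_\ell$.
   Context: The Sorgenfrey line $\mathbb R_\ell$ is $\mathbb R$ with the topology generated by the half-open intervals $[a,b[$, $a<b$. $\mathcal Q\mathbb R_\ell$ is the set of non-empty compact subsets of $\mathbb R_\ell$ ordered by reverse inclusion $\supseteq$; it is a dcpo whose directed suprema are intersections, and it carries its Scott topology. *)

theory Defs
  imports "HOL-Analysis.Analysis"
begin

definition sorgenfrey :: "real topology" where
  "sorgenfrey = topology_generated_by {{a..<b} | a b. a < b}"

definition QRl :: "real set set" where
  "QRl = {K. K \<noteq> {} \<and> compactin sorgenfrey K}"

definition QRl_le :: "real set \<Rightarrow> real set \<Rightarrow> bool" where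
  "QRl_le K L \<longleftrightarrow> L \<subseteq> K"

definition directed_in :: "'a set \<Rightarrow> ('a \<Rightarrow> 'a \<Rightarrow> bool) \<Rightarrow> 'a set \<Rightarrow> bool" where
  "directed_in P le D \<longleftrightarrow> D \<subseteq> P \<and> D \<noteq> {} \<and>
     (\<forall>a\<in>D. \<forall>b\<in>D. \<exists>c\<in>D. le a c \<and> le b c)"

definition is_lub_in :: "'a set \<Rightarrow> ('a \<Rightarrow> 'a \<Rightarrow> bool) \<Rightarrow> 'a set \<Rightarrow> 'a \<Rightarrow> bool" where
  "is_lub_in P le D s \<longleftrightarrow> s \<in> P \<and> (\<forall>d\<in>D. le d s) \<and>
     (\<forall>u\<in>P. (\<forall>d\<in>D. le d u) \<longrightarrow> le s u)"

definition scott_open :: "'a set \<Rightarrow> ('a \<Rightarrow> 'a \<Rightarrow> bool) \<Rightarrow> 'a set \<Rightarrow> bool" where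
  "scott_open P le U \<longleftrightarrow> U \<subseteq> P \<and>
     (\<forall>x\<in>U. \<forall>y\<in>P. le x y \<longrightarrow> y \<in> U) \<and>
     (\<forall>D s. directed_in P le D \<and> is_lub_in P le D s \<and> s \<in> U \<longrightarrow> D \<inter> U \<noteq> {})"

end

theory Submission
  imports Defs
begin

text \<open>
  If x belongs to W = {x. {x} \<in> U} but W contains no interval [x, x + e[, pick points
  y_m \<rightarrow> x with y_m \<ge> x and {y_m} \<notin> U. Since they approach x from the right, each tail
  K_n = {x} \<union> {y_m | m \<ge> n} is Sorgenfrey-compact. The K_n form a chain in QR_l
  whose supremum, the intersection, is {x} \<in> U; Scott-openness yields some K_n \<in> U,
  and then {y_n} \<in> U since U is an upper set, a contradiction.
\<close>

lemma topspace_sorgenfrey [simp]: "topspace sorgenfrey = UNIV"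
proof -
  have "x \<in> \<Union>{{a..<b} | a b. a < b}" for x :: real
  proof (rule UnionI)
    show "{x..<x + 1} \<in> {{a..<b} | a b. a < b}"
      by (intro CollectI exI[of _ x] exI[of _ "x + 1"]) simp
  qed simp
  then show ?thesis
    unfolding sorgenfrey_def topology_generated_by_topspace by blast
qed

lemma openin_sorgenfrey:
  "openin sorgenfrey S \<longleftrightarrow> (\<forall>x\<in>S. \<exists>e>0. {x..<x + e} \<subseteq> S)"
proof
  assume "openin sorgenfrey S"
  then have "generate_topology_on {{a..<b} | a b. a < b} S"
    unfolding sorgenfrey_def by (rule openin_topology_generated_by)
  then show "\<forall>x\<in>S. \<exists>e>0. {x..<x + e} \<subseteq> S"
  proof induction
    case (Int S T)
    show ?case
    proof
      fix x assume "x \<in> S \<inter> T"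
      with Int.IH obtain d e where "d > 0" "{x..<x + d} \<subseteq> S" "e > 0" "{x..<x + e} \<subseteq> T"
        by blast
      have "{x..<x + min d e} \<subseteq> {x..<x + d} \<inter> {x..<x + e}"
        by auto
      also have "\<dots> \<subseteq> S \<inter> T"
        using \<open>{x..<x + d} \<subseteq> S\<close> \<open>{x..<x + e} \<subseteq> T\<close> by blast
      finally have "{x..<x + min d e} \<subseteq> S \<inter> T" .
      moreover have "min d e > 0"
        using \<open>d > 0\<close> \<open>e > 0\<close> by simp
      ultimately show "\<exists>e>0. {x..<x + e} \<subseteq> S \<inter> T"
        by blast
    qed
  next
    case (UN \<K>)
    then show ?case by blast
  next
    case (Basis S)
    then obtain a b where S: "S = {a..<b}" by blast
    show ?case
    proof
      fix x assume "x \<in> S"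
      then have "b - x > 0" "{x..<x + (b - x)} \<subseteq> S"
        using S by auto
      then show "\<exists>e>0. {x..<x + e} \<subseteq> S"
        by blast
    qed
  qed simp
next
  assume nbhd: "\<forall>x\<in>S. \<exists>e>0. {x..<x + e} \<subseteq> S"
  have "\<exists>T. openin sorgenfrey T \<and> x \<in> T \<and> T \<subseteq> S" if "x \<in> S" for x
  proof -
    obtain e where "e > 0" "{x..<x + e} \<subseteq> S"
      using nbhd \<open>x \<in> S\<close> by blast
    moreover have "openin sorgenfrey {x..<x + e}"
      unfolding sorgenfrey_def using \<open>e > 0\<close>
      by (intro topology_generated_by_Basis CollectI exI[of _ x] exI[of _ "x + e"]) simp
    ultimately show ?thesis
      by (intro exI[of _ "{x..<x + e}"]) simp
  qed
  then show "openin sorgenfrey S"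
    by (subst openin_subopen) blast
qed

lemma limitin_sorgenfrey_from_right:
  assumes "eventually (\<lambda>n. x \<le> y n) F" and "(y \<longlongrightarrow> x) F"
  shows "limitin sorgenfrey y x F"
  unfolding limitin_def
proof (intro conjI allI impI)
  fix S assume "openin sorgenfrey S \<and> x \<in> S"
  then obtain e where "e > 0" "{x..<x + e} \<subseteq> S"
    by (auto simp: openin_sorgenfrey)
  have "eventually (\<lambda>n. y n < x + e) F"
    using \<open>e > 0\<close> assms(2) by (intro order_tendstoD) auto
  with assms(1) show "eventually (\<lambda>n. y n \<in> S) F"
    by eventually_elim (use \<open>{x..<x + e} \<subseteq> S\<close> in auto)
qed simp

lemma compactin_sorgenfrey_tail_with_limit:
  assumes "\<And>n. x \<le> y n" and "y \<longlonglongrightarrow> x"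
  shows "compactin sorgenfrey (insert x (y ` {k..}))"
  using assms by (intro compactin_sequence_with_limit limitin_sorgenfrey_from_right) auto

lemma Inter_tails_with_limit:
  fixes y :: "nat \<Rightarrow> 'a :: t2_space"
  assumes "y \<longlonglongrightarrow> x"
  shows "(\<Inter>k. insert x (y ` {k..})) = {x}"
proof (intro equalityI subsetI)
  fix z assume z: "z \<in> (\<Inter>k. insert x (y ` {k..}))"
  show "z \<in> {x}"
  proof (rule ccontr)
    assume "z \<notin> {x}"
    then have "eventually (\<lambda>n. y n \<noteq> z) sequentially"
      using assms by (intro tendsto_imp_eventually_ne) auto
    then obtain k where "\<And>n. n \<ge> k \<Longrightarrow> y n \<noteq> z"
      unfolding eventually_sequentially by blast
    with z \<open>z \<notin> {x}\<close> show False by blast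
  qed
qed blast

lemma seq_from_right_outside:
  fixes S :: "real set"
  assumes "\<not> (\<exists>e>0. {x..<x + e} \<subseteq> S)"
  obtains y where "\<And>n. x \<le> y n" "\<And>n. y n \<notin> S" "y \<longlonglongrightarrow> x"
proof -
  have "\<exists>z. z \<in> {x..<x + inverse (real (Suc n))} \<and> z \<notin> S" for n
  proof -
    have "inverse (real (Suc n)) > 0" by simp
    then show ?thesis using assms by blast
  qed
  then obtain y where y: "\<And>n. y n \<in> {x..<x + inverse (real (Suc n))} \<and> y n \<notin> S"
    by metis
  have "y \<longlonglongrightarrow> x"
  proof (rule real_tendsto_sandwich)
    show "\<forall>\<^sub>F n in sequentially. x \<le> y n"
      and "\<forall>\<^sub>F n in sequentially. y n \<le> x + inverse (real (Suc n))"
      using y by (auto intro!: always_eventually less_imp_le)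
    show "(\<lambda>n. x + inverse (real (Suc n))) \<longlonglongrightarrow> x"
      by (rule LIMSEQ_inverse_real_of_nat_add)
  qed simp
  with y show thesis by (intro that) auto
qed

lemma scott_open_upward_closed:
  "scott_open P le U \<Longrightarrow> x \<in> U \<Longrightarrow> y \<in> P \<Longrightarrow> le x y \<Longrightarrow> y \<in> U"
  unfolding scott_open_def by blast

lemma scott_open_inaccessible:
  assumes "scott_open P le U" "directed_in P le D" "is_lub_in P le D s" "s \<in> U"
  obtains d where "d \<in> D" "d \<in> U"
  using assms unfolding scott_open_def by blast

lemma singleton_in_QRl: "{x} \<in> QRl"
  by (simp add: QRl_def)

lemma directed_in_QRl_decseq:
  assumes "\<And>n. K n \<in> QRl" and "decseq K"
  shows "directed_in QRl QRl_le (range K)"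
  unfolding directed_in_def QRl_le_def
proof (intro conjI ballI)
  fix A B assume "A \<in> range K" "B \<in> range K"
  then obtain i j where "A = K i" "B = K j" by blast
  then show "\<exists>C\<in>range K. C \<subseteq> A \<and> C \<subseteq> B"
    using \<open>decseq K\<close> by (intro bexI[of _ "K (max i j)"]) (auto simp: decseq_def)
qed (use assms(1) in auto)

lemma is_lub_in_QRl_Inter:
  assumes "\<Inter>\<D> \<in> QRl"
  shows "is_lub_in QRl QRl_le \<D> (\<Inter>\<D>)"
  using assms unfolding is_lub_in_def QRl_le_def by blast

theorem lemma4p18:
  fixes U :: "real set set"
  assumes "scott_open QRl QRl_le U"
  shows "openin sorgenfrey {x. {x} \<in> U}"
  unfolding openin_sorgenfrey
proof (rule ballI, rule ccontr)
  fix x assume "x \<in> {x. {x} \<in> U}" and no_nbhd: "\<not> (\<exists>e>0. {x..<x + e} \<subseteq> {x. {x} \<in> U})"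
  from no_nbhd obtain y where y: "\<And>n. x \<le> y n" "\<And>n. y n \<notin> {x. {x} \<in> U}" "y \<longlonglongrightarrow> x"
    by (rule seq_from_right_outside) blast
  define K where "K k = insert x (y ` {k..})" for k
  have "K k \<in> QRl" for k
    unfolding QRl_def K_def using compactin_sorgenfrey_tail_with_limit[OF y(1,3)] by blast
  moreover have "decseq K"
    unfolding decseq_def K_def by auto
  ultimately have "directed_in QRl QRl_le (range K)"
    by (rule directed_in_QRl_decseq)
  moreover have "is_lub_in QRl QRl_le (range K) {x}"
  proof -
    have "\<Inter>(range K) = {x}"
      unfolding K_def by (rule Inter_tails_with_limit[OF y(3)])
    then show ?thesis
      using is_lub_in_QRl_Inter singleton_in_QRl by metis
  qed
  ultimately obtain k where "K k \<in> U"
    using scott_open_inaccessible[OF assms] \<open>x \<in> {x. {x} \<in> U}\<close> by blast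
  moreover have "QRl_le (K k) {y k}"
    unfolding QRl_le_def K_def by simp
  ultimately have "{y k} \<in> U"
    using scott_open_upward_closed[OF assms] singleton_in_QRl by blast
  with y(2) show False by blast
qed

end
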